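(* Let $n\ge1$ and $P\ge1$ be integers, $a_0\in[0,2]$ and $a_1\in[0,P-1]$, and define $$\mathcal{C}'_{2,3,P}=\{\boldsymbol{x}\in\Sigma_2^n:\ \mathrm{VT}^{(0)}(\boldsymbol{x})\equiv a_0\pmod 3,\ \mathrm{VT}^{(1)}(\boldsymbol{x})\equiv a_1\pmod P\}.$$ Then for any two distinct $\boldsymbol{x},\boldsymbol{y}\in\mathcal{C}'_{2,3,P}$, if the difference between the largest and the smallest index at which they differ is less than $P$, then $d_H(\boldsymbol{x},\boldsymbol{y})\ge3$. Moreover, there exists a choice of $a_0,a_1$ such that $r(\mathcal{C}'_{2,3,P})\le\log_2P+\log_23$.
   Context: $\Sigma_2=\{0,1\}$. For $\boldsymbol{x}\in\Sigma_2^n$, $x[i]$ is its $i$-th entry and $\mathrm{VT}^{(k)}(\boldsymbol{x})=\sum_{i=1}^n i^kx[i]$. $d_H$ is Hamming distance. Redundancy: $r(\mathcal{C})=n-\log_2|\mathcal{C}|$. *)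

theory Defs
  imports Complex_Main "HOL-Library.FuncSet"
begin

definition binwords :: "nat \<Rightarrow> (nat \<Rightarrow> nat) set" where
  "binwords n = {1..n} \<rightarrow>\<^sub>E {0, 1}"

definition VT :: "nat \<Rightarrow> nat \<Rightarrow> (nat \<Rightarrow> nat) \<Rightarrow> nat" where
  "VT k n x = (\<Sum>i=1..n. i ^ k * x i)"

definition diffpos :: "nat \<Rightarrow> (nat \<Rightarrow> nat) \<Rightarrow> (nat \<Rightarrow> nat) \<Rightarrow> nat set" where
  "diffpos n x y = {i \<in> {1..n}. x i \<noteq> y i}"

definition hamming :: "nat \<Rightarrow> (nat \<Rightarrow> nat) \<Rightarrow> (nat \<Rightarrow> nat) \<Rightarrow> nat" where
  "hamming n x y = card (diffpos n x y)"

definition codeC :: "nat \<Rightarrow> nat \<Rightarrow> nat \<Rightarrow> nat \<Rightarrow> (nat \<Rightarrow> nat) set" where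
  "codeC n P a0 a1 = {x \<in> binwords n. VT 0 n x mod 3 = a0 mod 3 \<and> VT 1 n x mod P = a1 mod P}"

definition redundancy :: "nat \<Rightarrow> (nat \<Rightarrow> nat) set \<Rightarrow> real" where
  "redundancy n C = real n - log 2 (real (card C))"

end

theory Submission
  imports Defs
begin

text \<open>
  Write \<open>e = x - y\<close> for two distinct codewords; it is supported on \<open>D = diffpos n x y\<close> with
  entries \<open>\<plusminus>1\<close>, and the two checks say that 3 divides \<open>\<Sum>i\<in>D. e i\<close> and
  \<open>P\<close> divides \<open>\<Sum>i\<in>D. i * e i\<close>.
  A single \<open>\<plusminus>1\<close> is not divisible by 3. If \<open>D = {i, j}\<close> with \<open>i < j\<close>, the first check forces
  \<open>e j = - e i\<close>, so the second gives \<open>P dvd j - i\<close>, impossible when \<open>0 < j - i < P\<close>.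
  For the redundancy, the \<open>3 P\<close> choices of \<open>(a\<^sub>0, a\<^sub>1)\<close> partition all \<open>2 ^ n\<close> words, so by
  pigeonhole one of the codes has at least \<open>2 ^ n / (3 P)\<close> elements.
\<close>

lemma finite_binwords: "finite (binwords n)"
  by (simp add: binwords_def finite_PiE)

lemma card_binwords: "card (binwords n) = 2 ^ n"
  by (simp add: binwords_def card_PiE numeral_2_eq_2)

lemma binwords_eqI:
  assumes "x \<in> binwords n" "y \<in> binwords n" "diffpos n x y = {}"
  shows "x = y"
  using assms by (auto simp: binwords_def diffpos_def intro: PiE_ext)

lemma binwords_diff_at_diffpos:
  assumes "x \<in> binwords n" "y \<in> binwords n" "i \<in> diffpos n x y"
  shows "int (x i) - int (y i) \<in> {1, -1}"
proof -
  have "i \<in> {1..n}" "x i \<noteq> y i" using assms(3) by (auto simp: diffpos_def)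
  moreover have "x i \<in> {0, 1}" "y i \<in> {0, 1}"
    using assms(1,2) \<open>i \<in> {1..n}\<close> by (auto simp: binwords_def)
  ultimately show ?thesis by auto
qed

lemma finite_diffpos: "finite (diffpos n x y)"
  by (simp add: diffpos_def)

lemma int_VT_diff:
  assumes "x \<in> binwords n" "y \<in> binwords n"
  shows "int (VT k n x) - int (VT k n y) =
           (\<Sum>i\<in>diffpos n x y. int (i ^ k) * (int (x i) - int (y i)))"
proof -
  have "int (VT k n x) - int (VT k n y) = (\<Sum>i\<in>{1..n}. int (i ^ k) * (int (x i) - int (y i)))"
    unfolding VT_def by (simp add: sum_subtractf[symmetric] algebra_simps)
  also have "\<dots> = (\<Sum>i\<in>diffpos n x y. int (i ^ k) * (int (x i) - int (y i)))"
    by (intro sum.mono_neutral_right) (auto simp: diffpos_def)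
  finally show ?thesis .
qed

lemma int_dvd_diff_of_mod_eq:
  fixes a b m :: nat
  assumes "a mod m = b mod m"
  shows "int m dvd int a - int b"
  using assms by (metis mod_eq_dvd_iff of_nat_mod)

lemma codeC_diff_dvd:
  assumes "x \<in> codeC n P a0 a1" "y \<in> codeC n P a0 a1"
  shows "3 dvd (\<Sum>i\<in>diffpos n x y. int (x i) - int (y i))"
    and "int P dvd (\<Sum>i\<in>diffpos n x y. int i * (int (x i) - int (y i)))"
proof -
  have bin: "x \<in> binwords n" "y \<in> binwords n"
    and "VT 0 n x mod 3 = VT 0 n y mod 3" "VT 1 n x mod P = VT 1 n y mod P"
    using assms by (auto simp: codeC_def)
  then have "int 3 dvd int (VT 0 n x) - int (VT 0 n y)"
    and "int P dvd int (VT 1 n x) - int (VT 1 n y)"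
    by (simp_all only: int_dvd_diff_of_mod_eq)
  then show "3 dvd (\<Sum>i\<in>diffpos n x y. int (x i) - int (y i))"
    and "int P dvd (\<Sum>i\<in>diffpos n x y. int i * (int (x i) - int (y i)))"
    by (simp_all add: int_VT_diff[OF bin])
qed

lemma codeC_diffpos_not_singleton:
  assumes "x \<in> codeC n P a0 a1" "y \<in> codeC n P a0 a1"
  shows "diffpos n x y \<noteq> {i}"
proof
  assume D: "diffpos n x y = {i}"
  have "x \<in> binwords n" "y \<in> binwords n" using assms by (auto simp: codeC_def)
  then have "int (x i) - int (y i) \<in> {1, -1}" by (rule binwords_diff_at_diffpos) (simp add: D)
  moreover have "3 dvd int (x i) - int (y i)" using codeC_diff_dvd(1)[OF assms] by (simp add: D)
  ultimately show False by auto
qed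

lemma codeC_diffpos_not_close_pair:
  assumes "x \<in> codeC n P a0 a1" "y \<in> codeC n P a0 a1"
    and "i < j" and "j - i < P"
  shows "diffpos n x y \<noteq> {i, j}"
proof
  assume D: "diffpos n x y = {i, j}"
  define d e where "d = int (x i) - int (y i)" and "e = int (x j) - int (y j)"
  have "x \<in> binwords n" "y \<in> binwords n" using assms by (auto simp: codeC_def)
  then have d: "d \<in> {1, -1}" and e: "e \<in> {1, -1}"
    using binwords_diff_at_diffpos[of x n y] unfolding d_def e_def D by auto
  have "3 dvd d + e" and P: "int P dvd int i * d + int j * e"
    using codeC_diff_dvd[OF assms(1,2)] \<open>i < j\<close> by (simp_all add: D d_def e_def)
  with d e have "e = - d" by auto
  then have "d * (int j - int i) = - (int i * d + int j * e)" by (simp add: algebra_simps)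
  with P have "int P dvd d * (int j - int i)" by (simp only: dvd_minus_iff)
  with d have "int P dvd int j - int i" by (auto simp: dvd_diff_commute)
  moreover have "0 < int j - int i" "int j - int i < int P" using assms(3,4) by auto
  ultimately show False using zdvd_imp_le by fastforce
qed

lemma codeC_hamming_ge_3:
  assumes "x \<in> codeC n P a0 a1" "y \<in> codeC n P a0 a1" "x \<noteq> y"
    and close: "Max (diffpos n x y) - Min (diffpos n x y) < P"
  shows "hamming n x y \<ge> 3"
proof (rule ccontr)
  define D where "D = diffpos n x y"
  assume "\<not> hamming n x y \<ge> 3"
  then have "card D < 3" by (simp add: hamming_def D_def)
  moreover have "D \<noteq> {}"
    using assms binwords_eqI by (auto simp: D_def codeC_def)
  then have "card D \<noteq> 0" by (simp add: D_def finite_diffpos)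
  ultimately consider "card D = 1" | "card D = 2" by linarith
  then show False
  proof cases
    case 1
    then obtain i where "D = {i}" by (auto simp: card_Suc_eq)
    then show False using codeC_diffpos_not_singleton[OF assms(1,2)] by (simp add: D_def)
  next
    case 2
    then obtain i j where "D = {i, j}" "i \<noteq> j" by (auto simp: card_Suc_eq numeral_2_eq_2)
    then obtain i j where D: "D = {i, j}" "i < j" by (metis insert_commute neqE)
    then have "j - i < P" using close by (simp add: D_def)
    then show False using codeC_diffpos_not_close_pair[OF assms(1,2) \<open>i < j\<close>] D
      by (simp add: D_def)
  qed
qed

lemma codeC_eq_fibre:
  assumes "b0 < 3" "b1 < P"
  shows "codeC n P b0 b1 =
           (\<lambda>x. (VT 0 n x mod 3, VT 1 n x mod P)) -` {(b0, b1)} \<inter> binwords n"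
  using assms by (auto simp: codeC_def)

lemma codeC_large:
  assumes "P \<ge> 1"
  shows "\<exists>b0 b1. b0 \<le> 2 \<and> b1 \<le> P - 1 \<and> 2 ^ n \<le> 3 * P * card (codeC n P b0 b1)"
proof -
  let ?syn = "\<lambda>x. (VT 0 n x mod 3, VT 1 n x mod P)"
  let ?S = "{..<3::nat} \<times> {..<P}"
  have "?syn \<in> binwords n \<rightarrow> ?S" using assms by auto
  moreover have "?S \<noteq> {}" using assms by (auto simp: lessThan_empty_iff)
  ultimately obtain b0 b1 where b: "b0 < 3" "b1 < P"
    and "card (?syn -` {(b0, b1)} \<inter> binwords n) * card ?S \<ge> card (binwords n)"
    using pigeonhole_card[of ?syn "binwords n" ?S] finite_binwords by auto
  then have "2 ^ n \<le> 3 * P * card (codeC n P b0 b1)"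
    by (simp add: codeC_eq_fibre card_binwords mult.commute)
  with b show ?thesis by (intro exI[of _ b0] exI[of _ b1]) auto
qed

lemma redundancy_le_log:
  assumes "2 ^ n \<le> m * card C"
  shows "redundancy n C \<le> log 2 (real m)"
proof -
  have "0 < m" "0 < card C" using assms by (auto intro: ccontr)
  have "real n = log 2 (2 ^ n)" by simp
  also have "\<dots> \<le> log 2 (real m * real (card C))"
    using assms \<open>0 < m\<close> \<open>0 < card C\<close> by (subst log_le_cancel_iff) (auto simp flip: of_nat_mult)
  also have "\<dots> = log 2 (real m) + log 2 (real (card C))"
    using \<open>0 < m\<close> \<open>0 < card C\<close> by (simp add: log_mult)
  finally show ?thesis by (simp add: redundancy_def)
qed

theorem theorem8:
  fixes n P a0 a1 :: nat
  assumes "n \<ge> 1" and "P \<ge> 1" and "a0 \<le> 2" and "a1 \<le> P - 1"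
  shows "(\<forall>x\<in>codeC n P a0 a1. \<forall>y\<in>codeC n P a0 a1.
            x \<noteq> y \<and> Max (diffpos n x y) - Min (diffpos n x y) < P
            \<longrightarrow> hamming n x y \<ge> 3)
         \<and> (\<exists>b0 b1. b0 \<le> 2 \<and> b1 \<le> P - 1 \<and> card (codeC n P b0 b1) > 0 \<and>
              redundancy n (codeC n P b0 b1) \<le> log 2 (real P) + log 2 3)"
proof (intro conjI)
  show "\<forall>x\<in>codeC n P a0 a1. \<forall>y\<in>codeC n P a0 a1.
          x \<noteq> y \<and> Max (diffpos n x y) - Min (diffpos n x y) < P \<longrightarrow> hamming n x y \<ge> 3"
    using codeC_hamming_ge_3 by blast
  obtain b0 b1 where b: "b0 \<le> 2" "b1 \<le> P - 1"
    and large: "2 ^ n \<le> 3 * P * card (codeC n P b0 b1)"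
    using codeC_large[OF \<open>P \<ge> 1\<close>] by blast
  then have "card (codeC n P b0 b1) > 0" by (auto intro: ccontr)
  moreover have "redundancy n (codeC n P b0 b1) \<le> log 2 (real P) + log 2 3"
    using redundancy_le_log[OF large] \<open>P \<ge> 1\<close> by (simp add: log_mult add.commute)
  ultimately show "\<exists>b0 b1. b0 \<le> 2 \<and> b1 \<le> P - 1 \<and> card (codeC n P b0 b1) > 0 \<and>
      redundancy n (codeC n P b0 b1) \<le> log 2 (real P) + log 2 3"
    using b by blast
qed

end
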